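(* Let $\mathcal{G}$ be the graph on vertices $\{1,2,3,4,5,6\}$ with edges $\{1,2\},\{1,3\},\{2,3\},\{4,5\},\{4,6\},\{5,6\},\{1,4\},\{2,5\},\{3,6\}$, and let $|\mathcal{G}\rangle\in\mathcal{B}^6$ be the stabilizer state stabilized (with all signs $+1$) by the operators $\sigma^x_u\prod_{v:\{u,v\}\in E}\sigma^z_v$, $u=1,\dots,6$. Suppose $|\mathcal{G}\rangle$ is shared by four parties $A=\{1,4\}$, $B=\{3,6\}$, $C=\{2\}$, $D=\{5\}$. Then $|\mathcal{G}\rangle$ is irreducible: there is no decomposition in which $|\mathcal{G}\rangle$ is LCU-equivalent to $|\Psi'\rangle\otimes|\Psi''\rangle$ with $|\Psi'\rangle,|\Psi''\rangle$ four-party stabilizer states each consisting of at least one qubit (party $\alpha$ holding $k_\alpha$ qubits of $|\Psi'\rangle$ and $n_\alpha-k_\alpha$ of $|\Psi''\rangle$, $0\le k_\alpha\le n_\alpha$, $1\le\sum_\alpha k_\alpha\le 5$).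
   Context: $\sigma^x_u,\sigma^z_u$ denote the Pauli matrices acting on qubit $u$. The Clifford group $\mathcal{C}(k)$ is the set of unitaries $U$ on $k$ qubits mapping each tensor product of Pauli matrices and identities, under conjugation, to $\pm$ such a tensor product. A stabilizer state on $k$ qubits is a unit vector that is the unique (up to phase) common $\pm1$-eigenvector of an abelian group generated by $k$ independent commuting Pauli tensor products. Two multi-party stabilizer states are LCU-equivalent if one equals $\bigotimes_\alpha U_\alpha$ applied to the other (up to global phase), where $U_\alpha$ is a Clifford unitary acting on the qubits of party $\alpha$. *)

theory Defs
  imports Complex_Main
begin

text \<open>
A state on a finite set Q of qubits is a
function from computational basis labels to complex amplitudes, where the basis
label S (a subset of Q) is the basis vector with qubits in S equal to 1 and the
others equal to 0; amplitudes outside Pow Q are 0. An operator on Q is a matrix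
indexed by Pow Q x Pow Q (entries outside are 0).
\<close>

type_synonym state = "nat set \<Rightarrow> complex"
type_synonym op = "nat set \<Rightarrow> nat set \<Rightarrow> complex"

definition vec_on :: "nat set \<Rightarrow> state \<Rightarrow> bool" where
  "vec_on Q v \<longleftrightarrow> (\<forall>S. \<not> S \<subseteq> Q \<longrightarrow> v S = 0)"

definition mat_on :: "nat set \<Rightarrow> op \<Rightarrow> bool" where
  "mat_on Q M \<longleftrightarrow> (\<forall>S T. \<not> (S \<subseteq> Q \<and> T \<subseteq> Q) \<longrightarrow> M S T = 0)"

definition vnorm :: "nat set \<Rightarrow> state \<Rightarrow> real" where
  "vnorm Q v = sqrt (\<Sum>S\<in>Pow Q. (cmod (v S))^2)"

definition apply_op :: "nat set \<Rightarrow> op \<Rightarrow> state \<Rightarrow> state" where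
  "apply_op Q M v = (\<lambda>S. if S \<subseteq> Q then (\<Sum>T\<in>Pow Q. M S T * v T) else 0)"

definition mmul :: "nat set \<Rightarrow> op \<Rightarrow> op \<Rightarrow> op" where
  "mmul Q M N = (\<lambda>S T. \<Sum>R\<in>Pow Q. M S R * N R T)"

definition adj :: "op \<Rightarrow> op" where
  "adj M = (\<lambda>S T. cnj (M T S))"

definition idm :: "nat set \<Rightarrow> op" where
  "idm Q = (\<lambda>S T. if S \<subseteq> Q \<and> S = T then 1 else 0)"

definition unitary_on :: "nat set \<Rightarrow> op \<Rightarrow> bool" where
  "unitary_on Q U \<longleftrightarrow> mat_on Q U \<and> mmul Q U (adj U) = idm Q \<and> mmul Q (adj U) U = idm Q"

definition symd :: "nat set \<Rightarrow> nat set \<Rightarrow> nat set" where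
  "symd A B = (A - B) \<union> (B - A)"

text \<open>The Pauli tensor product on Q having an X-component on the qubits of a and a
Z-component on the qubits of b: qubits in a - b carry sigma^x, qubits in b - a carry
sigma^z, qubits in a \<inter> b carry sigma^y = i sigma^x sigma^z, others the identity.\<close>
definition pauli :: "nat set \<Rightarrow> nat set \<Rightarrow> nat set \<Rightarrow> op" where
  "pauli Q a b = (\<lambda>S T. if S \<subseteq> Q \<and> T \<subseteq> Q \<and> S = symd T a
       then \<i> ^ card (a \<inter> b) * (-1) ^ card (b \<inter> T) else 0)"

definition clifford :: "nat set \<Rightarrow> op \<Rightarrow> bool" where
  "clifford Q U \<longleftrightarrow> unitary_on Q U \<and>
     (\<forall>a b. a \<subseteq> Q \<longrightarrow> b \<subseteq> Q \<longrightarrow>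
        (\<exists>a' b' (s::complex). a' \<subseteq> Q \<and> b' \<subseteq> Q \<and> (s = 1 \<or> s = -1) \<and>
           mmul Q (mmul Q U (pauli Q a b)) (adj U) = (\<lambda>S T. s * pauli Q a' b' S T)))"

text \<open>GF(2)-sum (iterated symmetric difference) of the sets f i, i \<in> J.\<close>
definition parity_set :: "nat set \<Rightarrow> (nat \<Rightarrow> nat set) \<Rightarrow> nat set" where
  "parity_set J f = {u. odd (card {i\<in>J. u \<in> f i})}"

text \<open>Independence = independence of the generated group modulo phases, i.e. no nonempty
product of generators is proportional to the identity.\<close>
definition stabilizer_state :: "nat set \<Rightarrow> state \<Rightarrow> bool" where
  "stabilizer_state Q v \<longleftrightarrow> finite Q \<and> vec_on Q v \<and> vnorm Q v = 1 \<and>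
    (\<exists>(g :: nat \<Rightarrow> nat set \<times> nat set) (s :: nat \<Rightarrow> complex).
       (\<forall>i<card Q. fst (g i) \<subseteq> Q \<and> snd (g i) \<subseteq> Q \<and> (s i = 1 \<or> s i = -1)) \<and>
       (\<forall>i<card Q. \<forall>j<card Q.
          mmul Q (pauli Q (fst (g i)) (snd (g i))) (pauli Q (fst (g j)) (snd (g j)))
        = mmul Q (pauli Q (fst (g j)) (snd (g j))) (pauli Q (fst (g i)) (snd (g i)))) \<and>
       (\<forall>J. J \<subseteq> {..<card Q} \<longrightarrow> J \<noteq> {} \<longrightarrow>
          parity_set J (\<lambda>i. fst (g i)) \<noteq> {} \<or> parity_set J (\<lambda>i. snd (g i)) \<noteq> {}) \<and>
       (\<forall>i<card Q. apply_op Q (pauli Q (fst (g i)) (snd (g i))) v = (\<lambda>S. s i * v S)) \<and>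
       (\<forall>w. vec_on Q w \<longrightarrow>
          (\<forall>i<card Q. apply_op Q (pauli Q (fst (g i)) (snd (g i))) w = (\<lambda>S. s i * w S)) \<longrightarrow>
          (\<exists>c. w = (\<lambda>S. c * v S))))"

definition tensor_state :: "nat set \<Rightarrow> nat set \<Rightarrow> state \<Rightarrow> state \<Rightarrow> state" where
  "tensor_state Q1 Q2 v w = (\<lambda>S. if S \<subseteq> Q1 \<union> Q2 then v (S \<inter> Q1) * w (S \<inter> Q2) else 0)"

definition local_op :: "nat set \<Rightarrow> nat set list \<Rightarrow> (nat \<Rightarrow> op) \<Rightarrow> op" where
  "local_op Q P U = (\<lambda>S T. if S \<subseteq> Q \<and> T \<subseteq> Q
      then (\<Prod>i<length P. U i (S \<inter> P ! i) (T \<inter> P ! i)) else 0)"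

definition Q6 :: "nat set" where "Q6 = {1,2,3,4,5,6}"

definition E6 :: "nat set set" where
  "E6 = {{1,2},{1,3},{2,3},{4,5},{4,6},{5,6},{1,4},{2,5},{3,6}}"

definition nbrs6 :: "nat \<Rightarrow> nat set" where
  "nbrs6 u = {v. {u, v} \<in> E6}"

definition parties6 :: "nat set list" where
  "parties6 = [{1,4}, {3,6}, {2}, {5}]"

end

theory Submission
  imports Defs "HOL-Library.Disjoint_Sets"
begin

text \<open>If a union \<open>X\<close> of parties has full cut-rank in the graph, the graph state is maximally mixed
  on \<open>X\<close>, and local unitaries of the parties preserve this. Were the state LCU-equivalent to
  \<open>\<psi>1 \<otimes> \<psi>2\<close>, each factor would be maximally mixed on its share of \<open>X\<close>; for a stabilizer
  state this forces that share to be at most half of its qubits, since the stabilizer group is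
  then determined by its restriction to the other half. Nine such cuts leave only splits in which
  one factor is a four-qubit stabilizer state maximally mixed across all three balanced cuts, and
  no such state exists.\<close>

lemma symd_assoc: "symd (symd A B) C = symd A (symd B C)"
  and symd_commute: "symd A B = symd B A"
  and symd_self [simp]: "symd A A = {}"
  and symd_empty [simp]: "symd A {} = A" "symd {} A = A"
  and symd_cancel [simp]: "symd (symd A B) B = A"
  and symd_eq_empty_iff: "symd A B = {} \<longleftrightarrow> A = B"
  and symd_eq_swap: "A = symd B C \<longleftrightarrow> B = symd A C"
  and symd_subset: "A \<subseteq> Q \<Longrightarrow> B \<subseteq> Q \<Longrightarrow> symd A B \<subseteq> Q"
  and Int_symd: "C \<inter> symd A B = symd (C \<inter> A) (C \<inter> B)"
  by (auto simp: symd_def)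

lemma card_symd:
  assumes "finite A" "finite B"
  shows "card A + card B = card (symd A B) + 2 * card (A \<inter> B)"
  using assms card_Int_Diff[of A B] card_Int_Diff[of B A]
  unfolding symd_def by (subst card_Un_disjoint) (auto simp: Int_commute)

lemma minus_one_power_card_symd:
  assumes "finite A" "finite B"
  shows "(-1::'a::ring_1) ^ card (symd A B) = (-1) ^ card A * (-1) ^ card B"
  using card_symd[OF assms] by (metis power_add power_minus1_even mult_1_right)

lemma sum_Pow_Un:
  fixes F :: "nat set \<Rightarrow> 'b::comm_monoid_add"
  assumes "finite A" "finite B" "A \<inter> B = {}"
  shows "(\<Sum>R\<in>Pow (A \<union> B). F R) = (\<Sum>R1\<in>Pow A. \<Sum>R2\<in>Pow B. F (R1 \<union> R2))"
proof -
  have "bij_betw (\<lambda>(R1, R2). R1 \<union> R2) (Pow A \<times> Pow B) (Pow (A \<union> B))"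
    by (rule bij_betw_byWitness[where f' = "\<lambda>R. (R \<inter> A, R \<inter> B)"]) (use assms(3) in auto)
  then show ?thesis
    by (simp add: sum.reindex_bij_betw[symmetric] sum.cartesian_product case_prod_unfold)
qed

lemma sum_Pow_subset:
  fixes F :: "nat set \<Rightarrow> 'b::comm_monoid_add"
  assumes "finite Q" "X \<subseteq> Q"
  shows "(\<Sum>S\<in>Pow Q. F S) = (\<Sum>S\<in>Pow X. \<Sum>R\<in>Pow (Q - X). F (S \<union> R))"
proof -
  have "Q = X \<union> (Q - X)" using assms(2) by blast
  then show ?thesis
    using sum_Pow_Un[of X "Q - X" F] assms by (metis Diff_disjoint finite_Diff finite_subset)
qed

lemma sum_Pow_flip_eq_0:
  fixes h :: "nat set \<Rightarrow> complex"
  assumes "x \<in> Y" and flip: "\<And>R. R \<subseteq> Y \<Longrightarrow> h (symd R {x}) = - h R"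
  shows "(\<Sum>R\<in>Pow Y. h R) = 0"
proof -
  have "bij_betw (\<lambda>R. symd R {x}) (Pow Y) (Pow Y)"
    by (rule bij_betw_byWitness[where f' = "\<lambda>R. symd R {x}"]) (use assms(1) in \<open>auto simp: symd_def\<close>)
  then have "(\<Sum>R\<in>Pow Y. h R) = (\<Sum>R\<in>Pow Y. h (symd R {x}))"
    by (rule sum.reindex_bij_betw[symmetric])
  also have "\<dots> = - (\<Sum>R\<in>Pow Y. h R)"
    by (simp add: flip sum_negf)
  finally show ?thesis by simp
qed

section \<open>Pauli operators and their eigenvectors\<close>

text \<open>\<open>z_sign b Z\<close> is the eigenvalue of the Pauli operator \<open>Z\<^sup>b\<close> on the basis vector \<open>Z\<close>.\<close>
definition z_sign :: "nat set \<Rightarrow> nat set \<Rightarrow> complex" where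
  "z_sign b Z = (-1) ^ card (b \<inter> Z)"

lemma z_sign_commute: "z_sign b Z = z_sign Z b"
  by (simp add: z_sign_def Int_commute)

lemma z_sign_symd: "finite A \<Longrightarrow> finite B \<Longrightarrow> z_sign b (symd A B) = z_sign b A * z_sign b B"
  unfolding z_sign_def Int_symd by (rule minus_one_power_card_symd) auto

lemma z_sign_symd_left: "finite b \<Longrightarrow> finite b' \<Longrightarrow> z_sign (symd b b') Z = z_sign b Z * z_sign b' Z"
  by (simp add: z_sign_commute[of _ Z] z_sign_symd)

lemma z_sign_Un_disjoint:
  "finite A \<Longrightarrow> finite B \<Longrightarrow> A \<inter> B = {} \<Longrightarrow> z_sign b (A \<union> B) = z_sign b A * z_sign b B"
  using z_sign_symd[of A B b] by (simp add: symd_def Un_Diff_Int Diff_triv Int_commute)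

lemma z_sign_mult_self [simp]: "z_sign b Z * z_sign b Z = 1"
  and cnj_z_sign [simp]: "cnj (z_sign b Z) = z_sign b Z"
  and z_sign_nonzero [simp]: "z_sign b Z \<noteq> 0"
  and z_sign_empty [simp]: "z_sign b {} = 1" "z_sign {} Z = 1"
  by (simp_all add: z_sign_def flip: power_add mult_2)

lemma apply_op_pauli:
  assumes "finite Q" "a \<subseteq> Q" "S \<subseteq> Q"
  shows "apply_op Q (pauli Q a b) v S = \<i> ^ card (a \<inter> b) * z_sign b (symd S a) * v (symd S a)"
proof -
  have "apply_op Q (pauli Q a b) v S
      = (\<Sum>T\<in>Pow Q. if T = symd S a then \<i> ^ card (a \<inter> b) * z_sign b T * v T else 0)"
    unfolding apply_op_def pauli_def z_sign_def using assms(3)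
    by (auto intro!: sum.cong simp: Int_commute symd_eq_swap)
  then show ?thesis
    using assms by (simp add: symd_subset)
qed

text \<open>The eigen-equation of \<open>pauli Q a b\<close> on the basis labels in \<open>Pow Q\<close>, with the phase
  \<open>\<i> ^ card (a \<inter> b)\<close> absorbed into the (nonzero) eigenvalue.\<close>
definition pauli_eigen :: "nat set \<Rightarrow> state \<Rightarrow> nat set \<Rightarrow> nat set \<Rightarrow> bool" where
  "pauli_eigen Q v a b \<longleftrightarrow> a \<subseteq> Q \<and> b \<subseteq> Q \<and>
     (\<exists>s. s \<noteq> 0 \<and> (\<forall>S\<subseteq>Q. z_sign b (symd S a) * v (symd S a) = s * v S))"

lemma pauli_eigenE:
  assumes "pauli_eigen Q v a b"
  obtains s where "s \<noteq> 0" "a \<subseteq> Q" "b \<subseteq> Q"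
    "\<forall>S\<subseteq>Q. z_sign b (symd S a) * v (symd S a) = s * v S"
  using assms unfolding pauli_eigen_def by (elim conjE exE) simp

lemma pauli_eigen_if_apply_op:
  assumes "finite Q" "a \<subseteq> Q" "b \<subseteq> Q" "s \<noteq> 0"
    and "apply_op Q (pauli Q a b) v = (\<lambda>S. s * v S)"
  shows "pauli_eigen Q v a b"
  unfolding pauli_eigen_def
proof (intro conjI exI[of _ "s / \<i> ^ card (a \<inter> b)"] allI impI)
  fix S assume "S \<subseteq> Q"
  then have "\<i> ^ card (a \<inter> b) * z_sign b (symd S a) * v (symd S a) = s * v S"
    using apply_op_pauli[OF assms(1,2)] assms(5) by metis
  then show "z_sign b (symd S a) * v (symd S a) = s / \<i> ^ card (a \<inter> b) * v S"
    by (simp add: field_simps)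
qed (use assms in auto)

lemma pauli_eigen_empty: "pauli_eigen Q v {} {}"
  unfolding pauli_eigen_def by (auto intro!: exI[of _ 1])

lemma eigen_eq_symd:
  assumes "finite Q" "a' \<subseteq> Q" "b \<subseteq> Q" "b' \<subseteq> Q" "S \<subseteq> Q" "symd S a \<subseteq> Q"
    and eq: "z_sign b (symd S a) * v (symd S a) = s * v S"
    and eq': "\<forall>Z\<subseteq>Q. z_sign b' (symd Z a') * v (symd Z a') = s' * v Z"
  shows "z_sign (symd b b') (symd S (symd a a')) * v (symd S (symd a a')) = z_sign b a' * s * s' * v S"
proof -
  have fin: "finite b" "finite b'" "finite a'" "finite (symd S a)"
    using assms finite_subset by blast+
  define Z where "Z = symd S a"
  have "z_sign (symd b b') (symd S (symd a a')) * v (symd S (symd a a'))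
      = z_sign b (symd Z a') * (z_sign b' (symd Z a') * v (symd Z a'))"
    by (simp add: Z_def symd_assoc z_sign_symd_left fin)
  also have "\<dots> = z_sign b (symd Z a') * (s' * v Z)"
    using eq' assms(6) by (simp add: Z_def)
  also have "\<dots> = z_sign b a' * s' * (z_sign b Z * v Z)"
    using fin by (simp add: Z_def z_sign_symd)
  also have "\<dots> = z_sign b a' * s * s' * v S"
    using eq by (simp add: Z_def)
  finally show ?thesis .
qed

lemma pauli_eigen_symd:
  assumes "finite Q" "pauli_eigen Q v a b" "pauli_eigen Q v a' b'"
  shows "pauli_eigen Q v (symd a a') (symd b b')"
proof -
  obtain s s' where "s \<noteq> 0" "s' \<noteq> 0"
    and eq: "\<forall>S\<subseteq>Q. z_sign b (symd S a) * v (symd S a) = s * v S"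
    and eq': "\<forall>S\<subseteq>Q. z_sign b' (symd S a') * v (symd S a') = s' * v S"
    and sub: "a \<subseteq> Q" "b \<subseteq> Q" "a' \<subseteq> Q" "b' \<subseteq> Q"
    using assms(2,3) by (elim pauli_eigenE)
  have "z_sign (symd b b') (symd S (symd a a')) * v (symd S (symd a a')) = z_sign b a' * s * s' * v S"
    if "S \<subseteq> Q" for S
    using eigen_eq_symd[OF assms(1) sub(3,2,4) that symd_subset[OF that sub(1)] _ eq'] eq that
    by blast
  then show ?thesis
    unfolding pauli_eigen_def using \<open>s \<noteq> 0\<close> \<open>s' \<noteq> 0\<close> sub
    by (intro conjI symd_subset exI[of _ "z_sign b a' * s * s'"]) auto
qed

text \<open>Pauli operators with a common eigenvector commute; \<open>z_sign b a' = z_sign b' a\<close> is the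
  commutation relation of \<open>pauli Q a b\<close> and \<open>pauli Q a' b'\<close>.\<close>
lemma pauli_eigen_commute:
  assumes "finite Q" "pauli_eigen Q v a b" "pauli_eigen Q v a' b'" "S \<subseteq> Q" "v S \<noteq> 0"
  shows "z_sign b a' = z_sign b' a"
proof -
  obtain s s' where "s \<noteq> 0" "s' \<noteq> 0"
    and eq: "\<forall>S\<subseteq>Q. z_sign b (symd S a) * v (symd S a) = s * v S"
    and eq': "\<forall>S\<subseteq>Q. z_sign b' (symd S a') * v (symd S a') = s' * v S"
    and sub: "a \<subseteq> Q" "b \<subseteq> Q" "a' \<subseteq> Q" "b' \<subseteq> Q"
    using assms(2,3) by (elim pauli_eigenE)
  have "z_sign b a' * s * s' * v S = z_sign b' a * s' * s * v S"
    using eigen_eq_symd[OF assms(1) sub(3,2,4) assms(4) _ eq[rule_format] eq']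
      eigen_eq_symd[OF assms(1) sub(1,4,2) assms(4) _ eq'[rule_format] eq]
      assms(4) sub by (simp add: symd_subset symd_commute)
  then show ?thesis using \<open>s \<noteq> 0\<close> \<open>s' \<noteq> 0\<close> assms(5) by simp
qed

section \<open>Maximally mixed reductions\<close>

lemma sum_z_sign_Pow:
  assumes "finite X" "b \<subseteq> X" "b \<noteq> {}"
  shows "(\<Sum>S\<in>Pow X. z_sign b S) = 0"
proof -
  obtain x where "x \<in> b" using assms(3) by blast
  have "z_sign b (symd S {x}) = - z_sign b S" if "S \<subseteq> X" for S
  proof -
    have "finite S" using that assms(1) by (rule finite_subset)
    then show ?thesis using z_sign_symd[of S "{x}" b] \<open>x \<in> b\<close> by (simp add: z_sign_def)
  qed
  then show ?thesis using sum_Pow_flip_eq_0 \<open>x \<in> b\<close> assms(2) by blast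
qed

definition orthogonal_rows :: "nat set \<Rightarrow> nat set \<Rightarrow> op \<Rightarrow> complex \<Rightarrow> bool" where
  "orthogonal_rows X Y M \<kappa> \<longleftrightarrow> (\<forall>S\<in>Pow X. \<forall>T\<in>Pow X.
      (\<Sum>R\<in>Pow Y. M S R * cnj (M T R)) = (if S = T then \<kappa> else 0))"

text \<open>The reduced density matrix of \<open>v\<close> on \<open>X\<close>, obtained by tracing out \<open>Q - X\<close>, is a nonzero
  multiple of the identity.\<close>
definition maximally_mixed :: "nat set \<Rightarrow> nat set \<Rightarrow> state \<Rightarrow> bool" where
  "maximally_mixed Q X v \<longleftrightarrow> (\<exists>\<kappa>. \<kappa> \<noteq> 0 \<and> orthogonal_rows X (Q - X) (\<lambda>S R. v (S \<union> R)) \<kappa>)"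

lemma pauli_expectation_maximally_mixed:
  assumes "finite Q" "X \<subseteq> Q" and mixed: "orthogonal_rows X (Q - X) (\<lambda>S R. v (S \<union> R)) \<kappa>"
    and "a \<subseteq> X" "b \<subseteq> X"
  shows "(\<Sum>S\<in>Pow Q. z_sign b (symd S a) * v (symd S a) * cnj (v S))
    = (if a = {} \<and> b = {} then of_nat (2 ^ card X) * \<kappa> else 0)"
proof -
  have fin: "finite X" using assms(1,2) finite_subset by blast
  have split: "z_sign b (symd (S \<union> R) a) * v (symd (S \<union> R) a) * cnj (v (S \<union> R))
      = z_sign b (symd S a) * (v (symd S a \<union> R) * cnj (v (S \<union> R)))"
    if "S \<subseteq> X" "R \<subseteq> Q - X" for S R
  proof -
    have "symd (S \<union> R) a = symd S a \<union> R" "b \<inter> (symd S a \<union> R) = b \<inter> symd S a"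
      using that \<open>a \<subseteq> X\<close> \<open>b \<subseteq> X\<close> by (auto simp: symd_def)
    then show ?thesis by (simp add: z_sign_def)
  qed
  have "(\<Sum>S\<in>Pow Q. z_sign b (symd S a) * v (symd S a) * cnj (v S))
      = (\<Sum>S\<in>Pow X. z_sign b (symd S a) * (if symd S a = S then \<kappa> else 0))"
    unfolding sum_Pow_subset[OF assms(1,2)]
  proof (intro sum.cong refl)
    fix S assume S: "S \<in> Pow X"
    then have "symd S a \<in> Pow X" using \<open>a \<subseteq> X\<close> by (simp add: symd_subset)
    then have "(\<Sum>R\<in>Pow (Q - X). v (symd S a \<union> R) * cnj (v (S \<union> R))) = (if symd S a = S then \<kappa> else 0)"
      using mixed S unfolding orthogonal_rows_def by blast
    moreover have "(\<Sum>R\<in>Pow (Q - X). z_sign b (symd (S \<union> R) a) * v (symd (S \<union> R) a) * cnj (v (S \<union> R)))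
        = z_sign b (symd S a) * (\<Sum>R\<in>Pow (Q - X). v (symd S a \<union> R) * cnj (v (S \<union> R)))"
      unfolding sum_distrib_left using split S by (intro sum.cong) auto
    ultimately show "(\<Sum>R\<in>Pow (Q - X). z_sign b (symd (S \<union> R) a) * v (symd (S \<union> R) a) * cnj (v (S \<union> R)))
        = z_sign b (symd S a) * (if symd S a = S then \<kappa> else 0)" by simp
  qed
  also have "\<dots> = (if a = {} \<and> b = {} then of_nat (2 ^ card X) * \<kappa> else 0)"
  proof (cases "a = {}")
    case True
    then show ?thesis
      using sum_z_sign_Pow[OF fin \<open>b \<subseteq> X\<close>] fin by (simp add: card_Pow flip: sum_distrib_right)
  next
    case False
    then have "symd S a \<noteq> S" for S by (auto simp: symd_def)
    then show ?thesis using False by simp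
  qed
  finally show ?thesis .
qed

text \<open>A nontrivial Pauli operator supported on \<open>X\<close> has expectation zero in a state that is
  maximally mixed on \<open>X\<close>, so it cannot have that state as an eigenvector.\<close>
lemma maximally_mixed_pauli_eigen_trivial:
  assumes "finite Q" "X \<subseteq> Q" and mixed: "maximally_mixed Q X v"
    and eigen: "pauli_eigen Q v a b" and "a \<subseteq> X" "b \<subseteq> X"
  shows "a = {} \<and> b = {}"
proof -
  obtain \<kappa> where "\<kappa> \<noteq> 0" and \<kappa>: "orthogonal_rows X (Q - X) (\<lambda>S R. v (S \<union> R)) \<kappa>"
    using mixed unfolding maximally_mixed_def by blast
  obtain s where "s \<noteq> 0" and s: "\<forall>S\<subseteq>Q. z_sign b (symd S a) * v (symd S a) = s * v S"
    using eigen by (elim pauli_eigenE)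
  have "(\<Sum>S\<in>Pow Q. z_sign b (symd S a) * v (symd S a) * cnj (v S)) = s * (\<Sum>S\<in>Pow Q. v S * cnj (v S))"
    by (simp add: s sum_distrib_left mult.assoc)
  moreover have "(\<Sum>S\<in>Pow Q. v S * cnj (v S)) = of_nat (2 ^ card X) * \<kappa>"
    using pauli_expectation_maximally_mixed[OF assms(1,2) \<kappa>, of "{}" "{}"] by simp
  ultimately have "(if a = {} \<and> b = {} then of_nat (2 ^ card X) * \<kappa> else 0) = s * (of_nat (2 ^ card X) * \<kappa>)"
    using pauli_expectation_maximally_mixed[OF assms(1,2) \<kappa> \<open>a \<subseteq> X\<close> \<open>b \<subseteq> X\<close>] by simp
  then show ?thesis
    using \<open>s \<noteq> 0\<close> \<open>\<kappa> \<noteq> 0\<close> by (auto split: if_splits)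
qed

section \<open>Stabilizer states\<close>

lemma vnorm_eq_1_nonzero:
  assumes "vnorm Q v = 1"
  obtains S where "S \<subseteq> Q" "v S \<noteq> 0"
proof (rule ccontr)
  assume "\<not> thesis"
  then have "\<forall>S\<in>Pow Q. v S = 0" using that by blast
  then show False using assms by (simp add: vnorm_def)
qed

lemma parity_set_empty [simp]: "parity_set {} f = {}"
  by (simp add: parity_set_def)

lemma parity_set_symd:
  assumes "finite J" "finite J'"
  shows "parity_set (symd J J') f = symd (parity_set J f) (parity_set J' f)"
proof -
  have "{i \<in> symd J J'. u \<in> f i} = symd {i\<in>J. u \<in> f i} {i\<in>J'. u \<in> f i}" for u
    by (auto simp: symd_def)
  moreover have "odd (card (symd A B)) \<longleftrightarrow> odd (card A) \<noteq> odd (card B)" if "finite A" "finite B" for A B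
    using card_symd[OF that] by presburger
  ultimately show ?thesis
    using assms by (auto simp: parity_set_def symd_def)
qed

lemma parity_set_insert:
  assumes "finite J" "j \<notin> J"
  shows "parity_set (insert j J) f = symd (parity_set J f) (f j)"
proof -
  have "{i\<in>{j}. u \<in> f i} = (if u \<in> f j then {j} else {})" for u by auto
  then have "parity_set {j} f = f j" by (auto simp: parity_set_def)
  moreover have "insert j J = symd J {j}" using assms(2) by (auto simp: symd_def)
  ultimately show ?thesis using parity_set_symd[OF assms(1)] by simp
qed

text \<open>\<open>(stab_x g J, stab_z g J)\<close> is the Pauli operator \<open>\<Prod>i\<in>J. pauli Q (fst (g i)) (snd (g i))\<close>,
  up to a phase.\<close>
definition stab_x :: "(nat \<Rightarrow> nat set \<times> nat set) \<Rightarrow> nat set \<Rightarrow> nat set" where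
  "stab_x g J = parity_set J (\<lambda>i. fst (g i))"

definition stab_z :: "(nat \<Rightarrow> nat set \<times> nat set) \<Rightarrow> nat set \<Rightarrow> nat set" where
  "stab_z g J = parity_set J (\<lambda>i. snd (g i))"

lemma stab_x_symd: "finite J \<Longrightarrow> finite J' \<Longrightarrow> stab_x g (symd J J') = symd (stab_x g J) (stab_x g J')"
  and stab_z_symd: "finite J \<Longrightarrow> finite J' \<Longrightarrow> stab_z g (symd J J') = symd (stab_z g J) (stab_z g J')"
  by (simp_all add: stab_x_def stab_z_def parity_set_symd)

definition stabilizer_group :: "nat set \<Rightarrow> state \<Rightarrow> (nat \<Rightarrow> nat set \<times> nat set) \<Rightarrow> bool" where
  "stabilizer_group Q v g \<longleftrightarrow>
     (\<forall>J\<subseteq>{..<card Q}. pauli_eigen Q v (stab_x g J) (stab_z g J)) \<and>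
     inj_on (\<lambda>J. (stab_x g J, stab_z g J)) (Pow {..<card Q})"

lemma stabilizer_state_group:
  assumes "stabilizer_state Q v"
  obtains g where "stabilizer_group Q v g"
proof -
  obtain g :: "nat \<Rightarrow> nat set \<times> nat set" and s :: "nat \<Rightarrow> complex" where
    "finite Q" and
    gens: "\<forall>i<card Q. fst (g i) \<subseteq> Q \<and> snd (g i) \<subseteq> Q \<and> (s i = 1 \<or> s i = -1)" and
    indep: "\<forall>J. J \<subseteq> {..<card Q} \<longrightarrow> J \<noteq> {} \<longrightarrow>
          parity_set J (\<lambda>i. fst (g i)) \<noteq> {} \<or> parity_set J (\<lambda>i. snd (g i)) \<noteq> {}" and
    eigen: "\<forall>i<card Q. apply_op Q (pauli Q (fst (g i)) (snd (g i))) v = (\<lambda>S. s i * v S)"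
    using assms unfolding stabilizer_state_def by (elim conjE exE) blast
  have "pauli_eigen Q v (stab_x g J) (stab_z g J)" if "J \<subseteq> {..<card Q}" for J
  proof -
    have "finite J" using that finite_subset by blast
    then show ?thesis using that
    proof (induction J rule: finite_induct)
      case empty
      then show ?case by (simp add: stab_x_def stab_z_def pauli_eigen_empty)
    next
      case (insert j J)
      then have "j < card Q" by simp
      then have "pauli_eigen Q v (fst (g j)) (snd (g j))"
        using gens eigen by (intro pauli_eigen_if_apply_op[OF \<open>finite Q\<close>, of _ _ "s j"]) auto
      then show ?case
        using pauli_eigen_symd[OF \<open>finite Q\<close>] insert
        by (simp add: stab_x_def stab_z_def parity_set_insert)
    qed
  qed
  moreover have "inj_on (\<lambda>J. (stab_x g J, stab_z g J)) (Pow {..<card Q})"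
  proof (rule inj_onI)
    fix J J' assume "J \<in> Pow {..<card Q}" "J' \<in> Pow {..<card Q}"
      and "(stab_x g J, stab_z g J) = (stab_x g J', stab_z g J')"
    moreover from this have "finite J" "finite J'" using finite_subset by auto
    ultimately have "stab_x g (symd J J') = {}" "stab_z g (symd J J') = {}"
      "symd J J' \<subseteq> {..<card Q}"
      by (simp_all add: stab_x_symd stab_z_symd symd_subset)
    then show "J = J'"
      using indep unfolding stab_x_def stab_z_def by (metis symd_eq_empty_iff)
  qed
  ultimately show thesis using that unfolding stabilizer_group_def by blast
qed

text \<open>If \<open>v\<close> is maximally mixed on \<open>X\<close>, two stabilizer elements that agree on \<open>Q - X\<close> differ by an
  element supported on \<open>X\<close>, which must be trivial.\<close>
lemma stabilizer_group_restrict_inj: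
  assumes "finite Q" "X \<subseteq> Q" "maximally_mixed Q X v" "stabilizer_group Q v g"
  shows "inj_on (\<lambda>J. (stab_x g J \<inter> (Q - X), stab_z g J \<inter> (Q - X))) (Pow {..<card Q})"
proof (rule inj_onI)
  fix J J' assume J: "J \<in> Pow {..<card Q}" and J': "J' \<in> Pow {..<card Q}"
    and eq: "(stab_x g J \<inter> (Q - X), stab_z g J \<inter> (Q - X)) = (stab_x g J' \<inter> (Q - X), stab_z g J' \<inter> (Q - X))"
  have fin: "finite J" "finite J'" using J J' finite_subset by auto
  define D where "D = symd J J'"
  have "D \<subseteq> {..<card Q}" using J J' by (simp add: D_def symd_subset)
  then have eigen: "pauli_eigen Q v (stab_x g D) (stab_z g D)"
    using assms(4) unfolding stabilizer_group_def by blast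
  then have "stab_x g D \<subseteq> X" "stab_z g D \<subseteq> X"
    using eq unfolding D_def stab_x_symd[OF fin] stab_z_symd[OF fin] pauli_eigen_def
    by (auto simp: symd_def)
  then have "stab_x g D = stab_x g {} \<and> stab_z g D = stab_z g {}"
    using maximally_mixed_pauli_eigen_trivial[OF assms(1-3) eigen]
    by (simp add: stab_x_def stab_z_def)
  then have "D = {}"
    using assms(4) \<open>D \<subseteq> {..<card Q}\<close> unfolding stabilizer_group_def inj_on_def by blast
  then show "J = J'" by (simp add: D_def symd_eq_empty_iff)
qed

text \<open>Counting the \<open>2 ^ card Q\<close> stabilizer elements through their restrictions to \<open>Q - X\<close>.\<close>
lemma stabilizer_maximally_mixed_card_le:
  assumes "stabilizer_state Q v" "X \<subseteq> Q" "maximally_mixed Q X v"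
  shows "card X \<le> card (Q - X)"
proof -
  obtain g where g: "stabilizer_group Q v g" using stabilizer_state_group[OF assms(1)] .
  have "finite Q" using assms(1) by (simp add: stabilizer_state_def)
  let ?h = "\<lambda>J. (stab_x g J \<inter> (Q - X), stab_z g J \<inter> (Q - X))"
  have "?h ` Pow {..<card Q} \<subseteq> Pow (Q - X) \<times> Pow (Q - X)" by auto
  then have "card (?h ` Pow {..<card Q}) \<le> card (Pow (Q - X) \<times> Pow (Q - X))"
    using \<open>finite Q\<close> by (intro card_mono) auto
  then have "(2::nat) ^ card Q \<le> 2 ^ (card (Q - X) + card (Q - X))"
    using \<open>finite Q\<close> stabilizer_group_restrict_inj[OF \<open>finite Q\<close> assms(2,3) g]
    by (simp add: card_image card_Pow card_cartesian_product power_add)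
  then have "card Q \<le> card (Q - X) + card (Q - X)" by simp
  moreover have "card Q = card X + card (Q - X)"
    using \<open>finite Q\<close> assms(2) by (metis card_Int_Diff inf.absorb_iff2)
  ultimately show ?thesis by simp
qed

lemma stabilizer_group_restrict_surj:
  assumes "finite Q" "X \<subseteq> Q" "maximally_mixed Q X v" "stabilizer_group Q v g"
    and "card Q = 2 * card (Q - X)" "x \<subseteq> Q - X" "z \<subseteq> Q - X"
  obtains J where "J \<subseteq> {..<card Q}" "stab_x g J \<inter> (Q - X) = x" "stab_z g J \<inter> (Q - X) = z"
proof -
  let ?h = "\<lambda>J. (stab_x g J \<inter> (Q - X), stab_z g J \<inter> (Q - X))"
  have "card (?h ` Pow {..<card Q}) = card (Pow (Q - X) \<times> Pow (Q - X))"
    using stabilizer_group_restrict_inj[OF assms(1-4)] assms(1,5)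
    by (simp add: card_image card_Pow card_cartesian_product mult_2 power_add)
  then have "?h ` Pow {..<card Q} = Pow (Q - X) \<times> Pow (Q - X)"
    using assms(1) by (intro card_subset_eq) auto
  moreover have "(x, z) \<in> Pow (Q - X) \<times> Pow (Q - X)" using assms(6,7) by simp
  ultimately have "(x, z) \<in> ?h ` Pow {..<card Q}" by simp
  then show thesis using that by auto
qed

text \<open>Two distinct non-identity single-qubit Pauli operators anticommute.\<close>
lemma single_qubit_paulis_anticommute:
  assumes "q \<in> x1 \<union> z1" "q \<in> x2 \<union> z2" "q \<in> symd x1 x2 \<union> symd z1 z2"
  shows "q \<in> z1 \<inter> x2 \<longleftrightarrow> q \<notin> z2 \<inter> x1"
  using assms by (auto simp: symd_def)

lemma four_qubit_paulis_anticommute: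
  assumes "distinct [a, b, c, d]" and sub: "x1 \<union> z1 \<union> x2 \<union> z2 \<subseteq> {a, b, c, d}"
    and restr: "x1 \<inter> {a, b} = {a}" "z1 \<inter> {a, b} = {}" "x2 \<inter> {a, b} = {}" "z2 \<inter> {a, b} = {a}"
    and nontrivial: "\<forall>q\<in>{c, d}. q \<in> x1 \<union> z1 \<and> q \<in> x2 \<union> z2 \<and> q \<in> symd x1 x2 \<union> symd z1 z2"
  shows "z_sign z1 x2 = - z_sign z2 x1"
proof -
  have "a \<in> x1" "a \<in> z2" "b \<notin> x1 \<union> z1 \<union> x2 \<union> z2" "a \<notin> z1 \<union> x2"
    using restr \<open>distinct [a, b, c, d]\<close> by auto
  then have "z1 \<inter> x2 \<subseteq> {c, d}" "z2 \<inter> x1 \<subseteq> {a, c, d}" "a \<in> z2 \<inter> x1" "a \<notin> z1 \<inter> x2"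
    using sub by blast+
  moreover have "q \<in> z1 \<inter> x2 \<longleftrightarrow> q \<notin> z2 \<inter> x1" if "q \<in> {c, d}" for q
    using nontrivial that by (intro single_qubit_paulis_anticommute) auto
  ultimately have "(z1 \<inter> x2) \<inter> (z2 \<inter> x1) = {}" "(z1 \<inter> x2) \<union> (z2 \<inter> x1) = {a, c, d}"
    by blast+
  moreover have "finite (z1 \<inter> x2)" "finite (z2 \<inter> x1)"
    using finite_subset[OF sub] by auto
  ultimately have "card (z1 \<inter> x2) + card (z2 \<inter> x1) = card {a, c, d}"
    by (metis card_Un_disjoint)
  also have "\<dots> = 3" using \<open>distinct [a, b, c, d]\<close> by simp
  finally have "card (z1 \<inter> x2) + card (z2 \<inter> x1) = 3" .
  then have "odd (card (z1 \<inter> x2)) \<longleftrightarrow> even (card (z2 \<inter> x1))" by presburger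
  then show ?thesis by (simp add: z_sign_def minus_one_power_iff)
qed

text \<open>Maximal mixedness on \<open>{c, d}\<close> yields stabilizer elements acting on \<open>{a, b}\<close> as
  \<open>\<sigma>\<^sup>x\<^sub>a\<close> and as \<open>\<sigma>\<^sup>z\<^sub>a\<close>; maximal mixedness on \<open>{a, c}\<close> and \<open>{a, d}\<close> forces them and their product to act nontrivially on both
  \<open>c\<close> and \<open>d\<close>, so that they anticommute.\<close>
lemma stabilizer_state_not_AME_4:
  assumes v: "stabilizer_state {a, b, c, d} v" and "distinct [a, b, c, d]"
    and mixed: "maximally_mixed {a, b, c, d} {c, d} v" "maximally_mixed {a, b, c, d} {a, c} v"
      "maximally_mixed {a, b, c, d} {a, d} v"
  shows False
proof -
  define Q where "Q = {a, b, c, d}"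
  obtain g where g: "stabilizer_group Q v g" using stabilizer_state_group v Q_def by blast
  have "finite Q" "{c, d} \<subseteq> Q" "Q - {c, d} = {a, b}" "card Q = 2 * card (Q - {c, d})"
    using \<open>distinct [a, b, c, d]\<close> by (auto simp: Q_def)
  note surj = stabilizer_group_restrict_surj[OF \<open>finite Q\<close> \<open>{c, d} \<subseteq> Q\<close> mixed(1)[folded Q_def] g
      \<open>card Q = 2 * card (Q - {c, d})\<close>, unfolded \<open>Q - {c, d} = {a, b}\<close>]
  obtain J1 where J1: "J1 \<subseteq> {..<card Q}" "stab_x g J1 \<inter> {a, b} = {a}" "stab_z g J1 \<inter> {a, b} = {}"
    by (rule surj[where x = "{a}" and z = "{}"]) auto
  obtain J2 where J2: "J2 \<subseteq> {..<card Q}" "stab_x g J2 \<inter> {a, b} = {}" "stab_z g J2 \<inter> {a, b} = {a}"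
    by (rule surj[where x = "{}" and z = "{a}"]) auto
  define x1 z1 x2 z2 where "x1 = stab_x g J1" "z1 = stab_z g J1" "x2 = stab_x g J2" "z2 = stab_z g J2"
  have "finite J1" "finite J2" using J1(1) J2(1) finite_subset by blast+
  then have eigen: "pauli_eigen Q v x1 z1" "pauli_eigen Q v x2 z2"
    "pauli_eigen Q v (symd x1 x2) (symd z1 z2)"
    using g J1(1) J2(1) symd_subset[OF J1(1) J2(1)] unfolding stabilizer_group_def
    by (auto simp: x1_z1_x2_z2_def simp flip: stab_x_symd stab_z_symd)
  then have sub: "x1 \<union> z1 \<union> x2 \<union> z2 \<subseteq> Q" by (simp add: pauli_eigen_def)
  have restr: "x1 \<inter> {a, b} = {a}" "z1 \<inter> {a, b} = {}" "x2 \<inter> {a, b} = {}" "z2 \<inter> {a, b} = {a}"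
    using J1 J2 by (simp_all add: x1_z1_x2_z2_def)
  have support: "q \<in> x \<union> z"
    if "pauli_eigen Q v x z" "x \<inter> {a, b} \<subseteq> {a}" "z \<inter> {a, b} \<subseteq> {a}" "a \<in> x \<union> z"
      and "maximally_mixed Q {a, r} v" "{q, r} = {c, d}" for x z q r
  proof (rule ccontr)
    assume "q \<notin> x \<union> z"
    moreover have "x \<subseteq> Q" "z \<subseteq> Q" using that(1) by (simp_all add: pauli_eigen_def)
    ultimately have "x \<subseteq> {a, r}" "z \<subseteq> {a, r}" using that(2,3,6) by (auto simp: Q_def doubleton_eq_iff)
    then show False
      using maximally_mixed_pauli_eigen_trivial[OF \<open>finite Q\<close> _ that(5,1)] that(4,6)
      by (auto simp: Q_def)
  qed
  have nontrivial: "q \<in> x1 \<union> z1 \<and> q \<in> x2 \<union> z2 \<and> q \<in> symd x1 x2 \<union> symd z1 z2"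
    if "{q, r} = {c, d}" and "maximally_mixed Q {a, r} v" for q r
    using support[OF eigen(1) _ _ _ that(2,1)] support[OF eigen(2) _ _ _ that(2,1)]
      support[OF eigen(3) _ _ _ that(2,1)] restr by (auto simp: symd_def)
  have "{d, c} = {c, d}" by blast
  then have "\<forall>q\<in>{c, d}. q \<in> x1 \<union> z1 \<and> q \<in> x2 \<union> z2 \<and> q \<in> symd x1 x2 \<union> symd z1 z2"
    using nontrivial[OF refl mixed(3)[folded Q_def]] nontrivial[of d c, OF _ mixed(2)[folded Q_def]]
    by blast
  then have "z_sign z1 x2 = - z_sign z2 x1"
    using four_qubit_paulis_anticommute[OF \<open>distinct [a, b, c, d]\<close> _ restr] sub by (simp add: Q_def)
  moreover obtain S where "S \<subseteq> Q" "v S \<noteq> 0"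
    using v by (auto simp: Q_def stabilizer_state_def elim: vnorm_eq_1_nonzero)
  then have "z_sign z1 x2 = z_sign z2 x1"
    using pauli_eigen_commute[OF \<open>finite Q\<close> eigen(1,2)] by blast
  ultimately show False by simp
qed

section \<open>Local unitaries and product states\<close>

lemma orthogonal_rows_cong:
  assumes "\<And>S R. S \<subseteq> X \<Longrightarrow> R \<subseteq> Y \<Longrightarrow> M S R = M' S R"
  shows "orthogonal_rows X Y M \<kappa> \<longleftrightarrow> orthogonal_rows X Y M' \<kappa>"
  unfolding orthogonal_rows_def using assms by (auto intro!: ball_cong sum.cong)

lemma sum_mult_cnj_sum:
  fixes a b :: "'i \<Rightarrow> complex" and x y :: "'i \<Rightarrow> 'r \<Rightarrow> complex"
  shows "(\<Sum>R\<in>C. (\<Sum>i\<in>I. a i * x i R) * cnj (\<Sum>j\<in>J. b j * y j R))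
       = (\<Sum>i\<in>I. \<Sum>j\<in>J. a i * cnj (b j) * (\<Sum>R\<in>C. x i R * cnj (y j R)))"
proof -
  have "(\<Sum>R\<in>C. (\<Sum>i\<in>I. a i * x i R) * cnj (\<Sum>j\<in>J. b j * y j R))
      = (\<Sum>R\<in>C. \<Sum>i\<in>I. \<Sum>j\<in>J. a i * cnj (b j) * (x i R * cnj (y j R)))"
    by (simp add: sum_product mult_ac)
  also have "\<dots> = (\<Sum>i\<in>I. \<Sum>j\<in>J. \<Sum>R\<in>C. a i * cnj (b j) * (x i R * cnj (y j R)))"
    by (subst sum.swap) (simp add: sum.swap[of _ C])
  finally show ?thesis by (simp add: sum_distrib_left)
qed

lemma sum_mult_delta:
  fixes f :: "'i \<Rightarrow> complex"
  assumes "finite J" "i \<in> J"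
  shows "(\<Sum>j\<in>J. f j * (if i = j then c else 0)) = f i * c"
  using assms by (simp add: if_distrib[of "\<lambda>x. _ * x"] cong: if_cong)

lemma orthogonal_rows_mult_left:
  assumes "finite X" "orthogonal_rows X X A 1" "orthogonal_rows X Y M \<kappa>"
  shows "orthogonal_rows X Y (\<lambda>S R. \<Sum>T\<in>Pow X. A S T * M T R) \<kappa>"
  unfolding orthogonal_rows_def
proof (intro ballI)
  fix S S' assume "S \<in> Pow X" "S' \<in> Pow X"
  have "(\<Sum>R\<in>Pow Y. (\<Sum>T\<in>Pow X. A S T * M T R) * cnj (\<Sum>T\<in>Pow X. A S' T * M T R))
      = (\<Sum>T\<in>Pow X. \<Sum>T'\<in>Pow X. A S T * cnj (A S' T') * (if T = T' then \<kappa> else 0))"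
    using assms(3) unfolding sum_mult_cnj_sum orthogonal_rows_def by simp
  also have "\<dots> = (\<Sum>T\<in>Pow X. A S T * cnj (A S' T)) * \<kappa>"
    using assms(1) by (simp add: sum_mult_delta sum_distrib_right)
  also have "\<dots> = (if S = S' then \<kappa> else 0)"
    using assms(2) \<open>S \<in> Pow X\<close> \<open>S' \<in> Pow X\<close> unfolding orthogonal_rows_def by simp
  finally show "(\<Sum>R\<in>Pow Y. (\<Sum>T\<in>Pow X. A S T * M T R) * cnj (\<Sum>T\<in>Pow X. A S' T * M T R))
      = (if S = S' then \<kappa> else 0)" .
qed

lemma orthogonal_rows_mult_right:
  assumes "finite Y" "orthogonal_rows Y Y (\<lambda>T R. B R T) 1" "orthogonal_rows X Y M \<kappa>"
  shows "orthogonal_rows X Y (\<lambda>S R. \<Sum>T\<in>Pow Y. M S T * B R T) \<kappa>"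
  unfolding orthogonal_rows_def
proof (intro ballI)
  fix S S' assume "S \<in> Pow X" "S' \<in> Pow X"
  have "(\<Sum>R\<in>Pow Y. (\<Sum>T\<in>Pow Y. M S T * B R T) * cnj (\<Sum>T\<in>Pow Y. M S' T * B R T))
      = (\<Sum>T\<in>Pow Y. \<Sum>T'\<in>Pow Y. M S T * cnj (M S' T') * (if T = T' then 1 else 0))"
    using assms(2) unfolding sum_mult_cnj_sum orthogonal_rows_def by simp
  also have "\<dots> = (\<Sum>T\<in>Pow Y. M S T * cnj (M S' T))"
    using assms(1) by (simp add: sum_mult_delta)
  also have "\<dots> = (if S = S' then \<kappa> else 0)"
    using assms(3) \<open>S \<in> Pow X\<close> \<open>S' \<in> Pow X\<close> unfolding orthogonal_rows_def by simp
  finally show "(\<Sum>R\<in>Pow Y. (\<Sum>T\<in>Pow Y. M S T * B R T) * cnj (\<Sum>T\<in>Pow Y. M S' T * B R T))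
      = (if S = S' then \<kappa> else 0)" .
qed

lemma unitary_on_orthogonal_rows:
  assumes "unitary_on Q U"
  shows "orthogonal_rows Q Q U 1" "orthogonal_rows Q Q (\<lambda>S T. U T S) 1"
proof -
  have "mmul Q U (adj U) S S' = idm Q S S'" "mmul Q (adj U) U S' S = idm Q S' S" for S S'
    using assms unfolding unitary_on_def by simp_all
  then have rows: "(\<Sum>R\<in>Pow Q. U S R * cnj (U S' R)) = idm Q S S'"
    and cols: "(\<Sum>R\<in>Pow Q. U R S * cnj (U R S')) = idm Q S' S" for S S'
    unfolding mmul_def adj_def by (simp_all add: mult.commute)
  show "orthogonal_rows Q Q U 1"
    unfolding orthogonal_rows_def rows by (simp add: idm_def)
  show "orthogonal_rows Q Q (\<lambda>S T. U T S) 1"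
    unfolding orthogonal_rows_def cols by (auto simp: idm_def)
qed
definition local_prod :: "(nat \<Rightarrow> nat set) \<Rightarrow> nat set \<Rightarrow> (nat \<Rightarrow> op) \<Rightarrow> op" where
  "local_prod P I U = (\<lambda>S T. \<Prod>i\<in>I. U i (S \<inter> P i) (T \<inter> P i))"

lemma sum_Pow_UN_prod:
  fixes F :: "nat \<Rightarrow> nat set \<Rightarrow> complex"
  assumes "finite I" "\<forall>i\<in>I. finite (P i)" "disjoint_family_on P I"
  shows "(\<Sum>R\<in>Pow (\<Union>i\<in>I. P i). \<Prod>i\<in>I. F i (R \<inter> P i)) = (\<Prod>i\<in>I. \<Sum>R\<in>Pow (P i). F i R)"
  using assms
proof (induction I rule: finite_induct)
  case empty
  then show ?case by simp
next
  case (insert j I)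
  have disj_j: "P j \<inter> P i = {}" if "i \<in> I" for i
    using insert.prems(2) insert.hyps(2) that unfolding disjoint_family_on_def by (metis insertCI)
  then have disj: "P j \<inter> (\<Union>i\<in>I. P i) = {}" by blast
  have "(\<Sum>R\<in>Pow (\<Union>i\<in>insert j I. P i). \<Prod>i\<in>insert j I. F i (R \<inter> P i))
      = (\<Sum>R1\<in>Pow (P j). \<Sum>R2\<in>Pow (\<Union>i\<in>I. P i). \<Prod>i\<in>insert j I. F i ((R1 \<union> R2) \<inter> P i))"
    using sum_Pow_Un[of "P j" "\<Union>i\<in>I. P i"] insert disj by simp
  also have "\<dots> = (\<Sum>R1\<in>Pow (P j). \<Sum>R2\<in>Pow (\<Union>i\<in>I. P i). F j R1 * (\<Prod>i\<in>I. F i (R2 \<inter> P i)))"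
  proof (intro sum.cong refl)
    fix R1 R2 assume "R1 \<in> Pow (P j)" "R2 \<in> Pow (\<Union>i\<in>I. P i)"
    then have "(R1 \<union> R2) \<inter> P j = R1" using disj by blast
    moreover have "(R1 \<union> R2) \<inter> P i = R2 \<inter> P i" if "i \<in> I" for i
      using disj_j[OF that] \<open>R1 \<in> Pow (P j)\<close> by blast
    ultimately show "(\<Prod>i\<in>insert j I. F i ((R1 \<union> R2) \<inter> P i)) = F j R1 * (\<Prod>i\<in>I. F i (R2 \<inter> P i))"
      using insert.hyps by simp
  qed
  also have "\<dots> = (\<Prod>i\<in>insert j I. \<Sum>R\<in>Pow (P i). F i R)"
    using insert by (simp add: disjoint_family_on_insert flip: sum_distrib_left sum_distrib_right)
  finally show ?case .
qed

lemma orthogonal_rows_local_prod: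
  assumes "finite I" "\<forall>i\<in>I. finite (P i)" "disjoint_family_on P I"
    and "\<forall>i\<in>I. orthogonal_rows (P i) (P i) (M i) 1"
  shows "orthogonal_rows (\<Union>i\<in>I. P i) (\<Union>i\<in>I. P i) (local_prod P I M) 1"
  unfolding orthogonal_rows_def
proof (intro ballI)
  fix S S' assume S: "S \<in> Pow (\<Union>i\<in>I. P i)" and S': "S' \<in> Pow (\<Union>i\<in>I. P i)"
  have "(\<Sum>T\<in>Pow (\<Union>i\<in>I. P i). local_prod P I M S T * cnj (local_prod P I M S' T))
      = (\<Prod>i\<in>I. \<Sum>R\<in>Pow (P i). M i (S \<inter> P i) R * cnj (M i (S' \<inter> P i) R))"
    using sum_Pow_UN_prod[OF assms(1-3), of "\<lambda>i R. M i (S \<inter> P i) R * cnj (M i (S' \<inter> P i) R)"]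
    by (simp add: local_prod_def prod.distrib)
  also have "\<dots> = (\<Prod>i\<in>I. if S \<inter> P i = S' \<inter> P i then 1 else 0)"
    using assms(4) unfolding orthogonal_rows_def by (intro prod.cong) auto
  also have "\<dots> = (if \<forall>i\<in>I. S \<inter> P i = S' \<inter> P i then 1 else 0)"
    using assms(1) by (cases "\<forall>i\<in>I. S \<inter> P i = S' \<inter> P i") auto
  also have "(\<forall>i\<in>I. S \<inter> P i = S' \<inter> P i) \<longleftrightarrow> S = S'"
    using S S' by blast
  finally show "(\<Sum>T\<in>Pow (\<Union>i\<in>I. P i). local_prod P I M S T * cnj (local_prod P I M S' T))
      = (if S = S' then 1 else 0)" .
qed

lemma local_prod_Un:
  assumes "finite K" "I \<subseteq> K" "disjoint_family_on P K"
    and "S \<subseteq> (\<Union>i\<in>I. P i)" "T \<subseteq> (\<Union>i\<in>I. P i)" "S' \<subseteq> (\<Union>k\<in>K - I. P k)" "T' \<subseteq> (\<Union>k\<in>K - I. P k)"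
  shows "local_prod P K U (S \<union> S') (T \<union> T') = local_prod P I U S T * local_prod P (K - I) U S' T'"
proof -
  have disj: "P i \<inter> P k = {}" if "i \<in> I" "k \<in> K - I" for i k
    using that assms(2) by (intro disjoint_family_onD[OF assms(3)]) auto
  have "(S \<union> S') \<inter> P i = S \<inter> P i" "(T \<union> T') \<inter> P i = T \<inter> P i" if "i \<in> I" for i
    using disj[OF that] assms(6,7) by blast+
  moreover have "(S \<union> S') \<inter> P k = S' \<inter> P k" "(T \<union> T') \<inter> P k = T' \<inter> P k" if "k \<in> K - I" for k
    using disj[OF _ that] assms(4,5) by blast+
  moreover have "local_prod P K U (S \<union> S') (T \<union> T')
      = (\<Prod>i\<in>I. U i ((S \<union> S') \<inter> P i) ((T \<union> T') \<inter> P i))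
        * (\<Prod>k\<in>K - I. U k ((S \<union> S') \<inter> P k) ((T \<union> T') \<inter> P k))"
    unfolding local_prod_def using prod.subset_diff[OF assms(2,1)] by (simp add: mult.commute)
  ultimately show ?thesis
    unfolding local_prod_def by (metis (no_types, lifting) prod.cong)
qed

text \<open>The local operator is \<open>A \<otimes> B\<close> with \<open>A\<close> acting on \<open>X\<close> and \<open>B\<close> on \<open>Q - X\<close>: the unitary
  \<open>A\<close> conjugates the reduced density matrix, and \<open>B\<close> drops out of the partial trace.\<close>
lemma maximally_mixed_local_prod:
  assumes "finite K" "\<forall>k\<in>K. finite (P k)" "disjoint_family_on P K" "Q = (\<Union>k\<in>K. P k)"
    and "\<forall>k\<in>K. unitary_on (P k) (U k)" "I \<subseteq> K" "maximally_mixed Q (\<Union>i\<in>I. P i) v"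
  shows "maximally_mixed Q (\<Union>i\<in>I. P i) (apply_op Q (local_prod P K U) v)"
proof -
  define X Y where "X = (\<Union>i\<in>I. P i)" and "Y = (\<Union>k\<in>K - I. P k)"
  have "P i \<inter> P k = {}" if "i \<in> I" "k \<in> K - I" for i k
    using that assms(6) by (intro disjoint_family_onD[OF assms(3)]) auto
  then have "Q - X = Y" "X \<subseteq> Q" using assms(4,6) by (auto simp: X_def Y_def)
  have fin: "finite X" "finite Y"
    using assms(1,2,6) by (auto simp: X_def Y_def intro: finite_subset)
  obtain \<kappa> where "\<kappa> \<noteq> 0" and mixed: "orthogonal_rows X Y (\<lambda>S R. v (S \<union> R)) \<kappa>"
    using assms(7) \<open>Q - X = Y\<close> unfolding maximally_mixed_def X_def by auto
  have sub: "finite I" "\<forall>i\<in>I. finite (P i)" "disjoint_family_on P I"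
    "finite (K - I)" "\<forall>k\<in>K - I. finite (P k)" "disjoint_family_on P (K - I)"
    using assms(1-3,6) by (auto intro: finite_subset disjoint_family_on_mono[of _ K])
  have rows: "orthogonal_rows X X (local_prod P I U) 1"
    unfolding X_def using sub assms(5,6) unitary_on_orthogonal_rows(1)
    by (intro orthogonal_rows_local_prod) auto
  have "(\<lambda>T R. local_prod P (K - I) U R T) = local_prod P (K - I) (\<lambda>k S T. U k T S)"
    by (simp add: local_prod_def)
  then have cols: "orthogonal_rows Y Y (\<lambda>T R. local_prod P (K - I) U R T) 1"
    unfolding Y_def using sub assms(5) unitary_on_orthogonal_rows(2)
    by (simp add: orthogonal_rows_local_prod)
  have "apply_op Q (local_prod P K U) v (S \<union> R)
      = (\<Sum>T\<in>Pow X. local_prod P I U S T * (\<Sum>T'\<in>Pow Y. v (T \<union> T') * local_prod P (K - I) U R T'))"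
    if "S \<subseteq> X" "R \<subseteq> Y" for S R
  proof -
    have "S \<union> R \<subseteq> Q" "finite Q" using that \<open>X \<subseteq> Q\<close> \<open>Q - X = Y\<close> fin by auto
    then have "apply_op Q (local_prod P K U) v (S \<union> R)
        = (\<Sum>T\<in>Pow X. \<Sum>T'\<in>Pow Y. local_prod P K U (S \<union> R) (T \<union> T') * v (T \<union> T'))"
      using sum_Pow_subset[OF _ \<open>X \<subseteq> Q\<close>] \<open>Q - X = Y\<close> by (simp add: apply_op_def)
    then show ?thesis
      using that local_prod_Un[OF assms(1,6,3)]
      by (simp add: X_def Y_def sum_distrib_left mult_ac)
  qed
  moreover have "orthogonal_rows X Y (\<lambda>S R. \<Sum>T\<in>Pow X. local_prod P I U S T *
      (\<Sum>T'\<in>Pow Y. v (T \<union> T') * local_prod P (K - I) U R T')) \<kappa>"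
    by (rule orthogonal_rows_mult_left[OF fin(1) rows orthogonal_rows_mult_right[OF fin(2) cols mixed]])
  ultimately show ?thesis
    using \<open>\<kappa> \<noteq> 0\<close> \<open>Q - X = Y\<close> unfolding maximally_mixed_def X_def[symmetric]
    by (subst orthogonal_rows_cong) auto
qed

lemma sum_tensor_state_mult_cnj:
  assumes "Q1 \<inter> Q2 = {}" "finite Q1" "finite Q2" "S \<subseteq> X \<inter> Q1" "T \<subseteq> X \<inter> Q1"
  shows "(\<Sum>R\<in>Pow (Q1 \<union> Q2 - X). tensor_state Q1 Q2 v w (S \<union> R) * cnj (tensor_state Q1 Q2 v w (T \<union> R)))
    = (\<Sum>R\<in>Pow (Q1 - X). v (S \<union> R) * cnj (v (T \<union> R))) * (\<Sum>R\<in>Pow (Q2 - X). w R * cnj (w R))"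
proof -
  have "Q1 \<union> Q2 - X = (Q1 - X) \<union> (Q2 - X)" "(Q1 - X) \<inter> (Q2 - X) = {}" using assms(1) by auto
  then have "(\<Sum>R\<in>Pow (Q1 \<union> Q2 - X). tensor_state Q1 Q2 v w (S \<union> R) * cnj (tensor_state Q1 Q2 v w (T \<union> R)))
      = (\<Sum>R1\<in>Pow (Q1 - X). \<Sum>R2\<in>Pow (Q2 - X).
          tensor_state Q1 Q2 v w (S \<union> (R1 \<union> R2)) * cnj (tensor_state Q1 Q2 v w (T \<union> (R1 \<union> R2))))"
    using sum_Pow_Un[of "Q1 - X" "Q2 - X"] assms(2,3) by simp
  also have "\<dots> = (\<Sum>R1\<in>Pow (Q1 - X). \<Sum>R2\<in>Pow (Q2 - X).
      (v (S \<union> R1) * cnj (v (T \<union> R1))) * (w R2 * cnj (w R2)))"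
  proof (intro sum.cong refl)
    fix R1 R2 assume "R1 \<in> Pow (Q1 - X)" "R2 \<in> Pow (Q2 - X)"
    then have "(S \<union> (R1 \<union> R2)) \<inter> Q1 = S \<union> R1" "(T \<union> (R1 \<union> R2)) \<inter> Q1 = T \<union> R1"
      "(S \<union> (R1 \<union> R2)) \<inter> Q2 = R2" "(T \<union> (R1 \<union> R2)) \<inter> Q2 = R2"
      "S \<union> (R1 \<union> R2) \<subseteq> Q1 \<union> Q2" "T \<union> (R1 \<union> R2) \<subseteq> Q1 \<union> Q2"
      using assms(1,4,5) by auto
    then show "tensor_state Q1 Q2 v w (S \<union> (R1 \<union> R2)) * cnj (tensor_state Q1 Q2 v w (T \<union> (R1 \<union> R2)))
      = (v (S \<union> R1) * cnj (v (T \<union> R1))) * (w R2 * cnj (w R2))"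
      by (simp add: tensor_state_def mult_ac)
  qed
  finally show ?thesis by (simp add: sum_product)
qed

lemma maximally_mixed_tensor_state:
  assumes "Q1 \<inter> Q2 = {}" "finite Q1" "finite Q2"
    and "maximally_mixed (Q1 \<union> Q2) X (\<lambda>S. c * tensor_state Q1 Q2 v w S)"
  shows "maximally_mixed Q1 (X \<inter> Q1) v"
proof -
  define \<rho> where "\<rho> S T = (\<Sum>R\<in>Pow (Q1 - X). v (S \<union> R) * cnj (v (T \<union> R)))" for S T
  define \<mu> where "\<mu> = c * cnj c * (\<Sum>R\<in>Pow (Q2 - X). w R * cnj (w R))"
  obtain \<kappa> where "\<kappa> \<noteq> 0" and \<kappa>: "orthogonal_rows X (Q1 \<union> Q2 - X) (\<lambda>S R. c * tensor_state Q1 Q2 v w (S \<union> R)) \<kappa>"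
    using assms(4) unfolding maximally_mixed_def by blast
  have \<rho>: "\<mu> * \<rho> S T = (if S = T then \<kappa> else 0)" if "S \<subseteq> X \<inter> Q1" "T \<subseteq> X \<inter> Q1" for S T
  proof -
    have "(\<Sum>R\<in>Pow (Q1 \<union> Q2 - X). c * tensor_state Q1 Q2 v w (S \<union> R) * cnj (c * tensor_state Q1 Q2 v w (T \<union> R)))
        = c * cnj c * (\<Sum>R\<in>Pow (Q1 \<union> Q2 - X). tensor_state Q1 Q2 v w (S \<union> R) * cnj (tensor_state Q1 Q2 v w (T \<union> R)))"
      by (simp add: sum_distrib_left mult_ac)
    also have "\<dots> = \<mu> * \<rho> S T"
      using sum_tensor_state_mult_cnj[OF assms(1-3) that] by (simp add: \<mu>_def \<rho>_def mult_ac)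
    finally show ?thesis
      using \<kappa> that unfolding orthogonal_rows_def by auto
  qed
  then have "\<mu> \<noteq> 0" using \<open>\<kappa> \<noteq> 0\<close> by force
  then have "\<rho> S T = (if S = T then \<kappa> / \<mu> else 0)" if "S \<subseteq> X \<inter> Q1" "T \<subseteq> X \<inter> Q1" for S T
    using \<rho>[OF that] by (cases "S = T") (auto simp: field_simps)
  moreover have "Q1 - X \<inter> Q1 = Q1 - X" by blast
  ultimately have "orthogonal_rows (X \<inter> Q1) (Q1 - X \<inter> Q1) (\<lambda>S R. v (S \<union> R)) (\<kappa> / \<mu>)"
    unfolding orthogonal_rows_def \<rho>_def by simp
  then show ?thesis
    using \<open>\<kappa> \<noteq> 0\<close> \<open>\<mu> \<noteq> 0\<close> unfolding maximally_mixed_def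
    by (intro exI[of _ "\<kappa> / \<mu>"]) simp
qed

lemma tensor_state_commute: "tensor_state Q1 Q2 v w = tensor_state Q2 Q1 w v"
  unfolding tensor_state_def by (auto simp: Un_commute mult.commute)

section \<open>Graph states\<close>

lemma graph_state_flip:
  assumes "finite Q" "u \<in> Q" "u \<notin> N u" "apply_op Q (pauli Q {u} (N u)) v = v" "Z \<subseteq> Q"
  shows "v (symd Z {u}) = z_sign (N u) Z * v Z"
proof -
  have "v (symd Z {u}) = apply_op Q (pauli Q {u} (N u)) v (symd Z {u})"
    using assms(4) by simp
  also have "\<dots> = z_sign (N u) Z * v Z"
    using apply_op_pauli[OF assms(1)] assms(2,3,5) by (simp add: symd_subset)
  finally show ?thesis .
qed

lemma graph_state_cmod_const:
  assumes "finite Q" "\<forall>u\<in>Q. u \<notin> N u" "\<forall>u\<in>Q. apply_op Q (pauli Q {u} (N u)) v = v" "Z \<subseteq> Q"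
  shows "cmod (v Z) = cmod (v {})"
proof -
  have "finite Z" using assms(1,4) finite_subset by blast
  then show ?thesis using assms(4)
  proof (induction Z rule: finite_induct)
    case (insert u Z)
    then have "u \<in> Q" "Z \<subseteq> Q" "insert u Z = symd Z {u}" by (auto simp: symd_def)
    then have "v (insert u Z) = z_sign (N u) Z * v Z"
      using graph_state_flip[OF assms(1) \<open>u \<in> Q\<close> _ _ \<open>Z \<subseteq> Q\<close>] assms(2,3) by simp
    then show ?case using insert by (simp add: z_sign_def norm_mult norm_power)
  qed simp
qed

lemma graph_state_flip_antisymmetric:
  assumes "finite Q" "X \<subseteq> Q" "r \<in> Q - X" "r \<notin> N r" "apply_op Q (pauli Q {r} (N r)) v = v"
    and "S \<subseteq> X" "T \<subseteq> X" "R \<subseteq> Q - X" "odd (card (N r \<inter> symd S T))"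
  shows "v (S \<union> symd R {r}) * cnj (v (T \<union> symd R {r})) = - (v (S \<union> R) * cnj (v (T \<union> R)))"
proof -
  have "finite X" using assms(2,1) by (rule finite_subset)
  then have fin: "finite S" "finite T" "finite R"
    using assms(1,6-8) by (auto intro: finite_subset)
  have eqs: "S \<union> symd R {r} = symd (S \<union> R) {r}" "T \<union> symd R {r} = symd (T \<union> R) {r}"
    and disj: "S \<inter> R = {}" "T \<inter> R = {}"
    and sub: "r \<in> Q" "S \<union> R \<subseteq> Q" "T \<union> R \<subseteq> Q"
    using assms(2,3,6-8) by (auto simp: symd_def)
  note flip = graph_state_flip[of Q r N v, OF assms(1) sub(1) assms(4,5)]
  have "v (S \<union> symd R {r}) * cnj (v (T \<union> symd R {r}))
      = (z_sign (N r) S * z_sign (N r) T) * (z_sign (N r) R * z_sign (N r) R)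
        * (v (S \<union> R) * cnj (v (T \<union> R)))"
    unfolding eqs flip[OF sub(2)] flip[OF sub(3)]
      z_sign_Un_disjoint[OF fin(1,3) disj(1)] z_sign_Un_disjoint[OF fin(2,3) disj(2)]
    by (simp add: mult_ac)
  also have "z_sign (N r) S * z_sign (N r) T = -1"
    using assms(9) z_sign_symd[OF fin(1,2), of "N r"] by (simp add: z_sign_def)
  finally show ?thesis by simp
qed

text \<open>The rows of the biadjacency matrix of the cut \<open>(X, Q - X)\<close> are linearly independent over
  GF(2), i.e.\ the cut-rank of \<open>X\<close> is \<open>card X\<close>.\<close>
definition full_cut_rank :: "nat set \<Rightarrow> (nat \<Rightarrow> nat set) \<Rightarrow> nat set \<Rightarrow> bool" where
  "full_cut_rank Q N X \<longleftrightarrow> (\<forall>D\<subseteq>X. D \<noteq> {} \<longrightarrow> (\<exists>r\<in>Q - X. odd (card (N r \<inter> D))))"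

lemma full_cut_rank_iff:
  "full_cut_rank Q N X \<longleftrightarrow> (\<forall>D\<in>Pow X - {{}}. \<exists>r\<in>Q - X. odd (card (N r \<inter> D)))"
  unfolding full_cut_rank_def by blast

text \<open>All basis amplitudes of a graph state have the same modulus; for \<open>S \<noteq> T\<close> the entry of the
  reduced density matrix cancels under the flip of a qubit \<open>r \<notin> X\<close> having an odd number of
  neighbours in \<open>symd S T\<close>.\<close>
lemma graph_state_maximally_mixed:
  assumes "finite Q" "\<forall>u\<in>Q. u \<notin> N u" and stab: "\<forall>u\<in>Q. apply_op Q (pauli Q {u} (N u)) v = v"
    and "vnorm Q v = 1" "X \<subseteq> Q" "full_cut_rank Q N X"
  shows "maximally_mixed Q X v"
proof -
  have cmod: "v Z * cnj (v Z) = v {} * cnj (v {})" if "Z \<subseteq> Q" for Z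
    using graph_state_cmod_const[OF assms(1-3) that] by (metis complex_norm_square)
  obtain S0 where "S0 \<subseteq> Q" "v S0 \<noteq> 0" using assms(4) by (rule vnorm_eq_1_nonzero)
  then have "v {} \<noteq> 0" using graph_state_cmod_const[OF assms(1-3)] by fastforce
  then have nonzero: "of_nat (card (Pow (Q - X))) * (v {} * cnj (v {})) \<noteq> 0"
    using assms(1) by (simp add: card_Pow)
  have "(\<Sum>R\<in>Pow (Q - X). v (S \<union> R) * cnj (v (T \<union> R)))
      = (if S = T then of_nat (card (Pow (Q - X))) * (v {} * cnj (v {})) else 0)"
    if S: "S \<subseteq> X" and T: "T \<subseteq> X" for S T
  proof (cases "S = T")
    case True
    have "(\<Sum>R\<in>Pow (Q - X). v (S \<union> R) * cnj (v (S \<union> R))) = (\<Sum>R\<in>Pow (Q - X). v {} * cnj (v {}))"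
      using S assms(5) by (intro sum.cong refl cmod) auto
    then show ?thesis using True by simp
  next
    case False
    then have "symd S T \<subseteq> X" "symd S T \<noteq> {}"
      using S T by (simp_all add: symd_subset symd_eq_empty_iff)
    then obtain r where "r \<in> Q - X" and odd: "odd (card (N r \<inter> symd S T))"
      using assms(6) unfolding full_cut_rank_def by blast
    then have "(\<Sum>R\<in>Pow (Q - X). v (S \<union> R) * cnj (v (T \<union> R))) = 0"
      using graph_state_flip_antisymmetric[of Q X r N v, OF assms(1,5) \<open>r \<in> Q - X\<close> _ _ S T _ odd] assms(2) stab
      by (intro sum_Pow_flip_eq_0[where h = "\<lambda>R. v (S \<union> R) * cnj (v (T \<union> R))"]) auto
    then show ?thesis using False by simp
  qed
  then show ?thesis
    using nonzero unfolding maximally_mixed_def orthogonal_rows_def by blast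
qed

section \<open>The six-qubit state\<close>

lemma apply_op_local_op:
  "apply_op Q (local_op Q Ps U) v = apply_op Q (local_prod (\<lambda>i. Ps ! i) {..<length Ps} U) v"
  by (auto simp: apply_op_def local_op_def local_prod_def intro!: sum.cong)

lemma parties6_partition:
  "length parties6 = 4" "\<forall>k\<in>{..<4}. finite (parties6 ! k)"
  "disjoint_family_on (\<lambda>k. parties6 ! k) {..<4}" "Q6 = (\<Union>k<4. parties6 ! k)"
  by (auto simp: parties6_def Q6_def lessThan_Suc numeral_eq_Suc disjoint_family_on_def)

definition party_cuts6 :: "nat set set" where
  "party_cuts6 = (\<lambda>I. \<Union>i\<in>I. parties6 ! i) ` {{0}, {1}, {2}, {3}, {2, 3}, {0, 2}, {0, 3}, {1, 2}, {1, 3}}"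

lemma party_cuts6_eq:
  "party_cuts6 = {{1, 4}, {3, 6}, {2}, {5}, {2, 5}, {1, 2, 4}, {1, 4, 5}, {2, 3, 6}, {3, 5, 6}}"
  by (simp add: party_cuts6_def parties6_def numeral_eq_Suc insert_commute)

lemma nbrs6_eq: "nbrs6 u = {v \<in> Q6. {u, v} \<in> E6}"
  by (auto simp: nbrs6_def E6_def Q6_def doubleton_eq_iff)

lemma nbrs6_loop_free: "\<forall>u\<in>Q6. u \<notin> nbrs6 u"
  unfolding Q6_def nbrs6_eq E6_def by code_simp

lemma full_cut_rank_party_cuts6: "\<forall>X\<in>party_cuts6. full_cut_rank Q6 nbrs6 X"
  unfolding party_cuts6_eq full_cut_rank_iff Q6_def nbrs6_eq E6_def by code_simp

lemma LCU_tensor_maximally_mixed: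
  assumes "vnorm Q6 G = 1" "\<forall>u\<in>Q6. apply_op Q6 (pauli Q6 {u} (nbrs6 u)) G = G"
    and "\<forall>i<length parties6. unitary_on (parties6 ! i) (U i)"
    and "Q1 \<inter> Q2 = {}" "Q1 \<union> Q2 = Q6" "finite Q1" "finite Q2"
    and "apply_op Q6 (local_op Q6 parties6 U) G = (\<lambda>S. c * tensor_state Q1 Q2 \<psi>1 \<psi>2 S)"
    and "X \<in> party_cuts6"
  shows "maximally_mixed Q1 (X \<inter> Q1) \<psi>1 \<and> maximally_mixed Q2 (X \<inter> Q2) \<psi>2"
proof -
  obtain I where I: "I \<in> {{0}, {1}, {2}, {3}, {2, 3}, {0, 2}, {0, 3}, {1, 2}, {1, 3}}"
    and X: "X = (\<Union>i\<in>I. parties6 ! i)"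
    using \<open>X \<in> party_cuts6\<close> unfolding party_cuts6_def by blast
  then have "I \<subseteq> {..<4}" by auto
  have "finite Q6" by (simp add: Q6_def)
  have "X \<subseteq> Q6" unfolding X parties6_partition(4) using \<open>I \<subseteq> {..<4}\<close> by auto
  moreover have "full_cut_rank Q6 nbrs6 X" using full_cut_rank_party_cuts6 assms(9) by blast
  ultimately have "maximally_mixed Q6 X G"
    using graph_state_maximally_mixed[OF \<open>finite Q6\<close> nbrs6_loop_free assms(2,1)] by blast
  then have "maximally_mixed Q6 X (apply_op Q6 (local_op Q6 parties6 U) G)"
    unfolding apply_op_local_op X using \<open>I \<subseteq> {..<4}\<close> assms(3) parties6_partition
    by (intro maximally_mixed_local_prod) auto
  then have "maximally_mixed (Q1 \<union> Q2) X (\<lambda>S. c * tensor_state Q1 Q2 \<psi>1 \<psi>2 S)"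
    "maximally_mixed (Q2 \<union> Q1) X (\<lambda>S. c * tensor_state Q2 Q1 \<psi>2 \<psi>1 S)"
    using assms(5,8) by (simp_all add: tensor_state_commute Un_commute)
  then show ?thesis
    using maximally_mixed_tensor_state assms(4,6,7) by (metis inf_commute)
qed

lemma party_side_not_AME:
  assumes "stabilizer_state Q \<psi>" "a \<in> {1, 4}" "b \<in> {3, 6}" "Q = {a, b, 2, 5}"
    and "\<forall>X\<in>party_cuts6. maximally_mixed Q (X \<inter> Q) \<psi>"
  shows False
proof -
  have "{2, 5} \<inter> Q = {2, 5}" "{1, 2, 4} \<inter> Q = {a, 2}" "{1, 4, 5} \<inter> Q = {a, 5}"
    using assms(2-4) by auto
  then have "maximally_mixed Q {2, 5} \<psi>" "maximally_mixed Q {a, 2} \<psi>" "maximally_mixed Q {a, 5} \<psi>"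
    using assms(5) unfolding party_cuts6_eq by (metis insertCI)+
  moreover have "distinct [a, b, 2, 5]" using assms(2,3) by auto
  ultimately show False
    using stabilizer_state_not_AME_4 assms(1,4) by blast
qed

definition balanced6 :: "nat set \<Rightarrow> bool" where
  "balanced6 Q \<longleftrightarrow> (\<forall>X\<in>party_cuts6. card (X \<inter> Q) \<le> card (Q - X))"

lemma balanced6_bipartitions:
  "\<forall>Q1\<in>Pow Q6. Q1 \<noteq> {} \<longrightarrow> Q1 \<noteq> Q6 \<longrightarrow> balanced6 Q1 \<longrightarrow> balanced6 (Q6 - Q1) \<longrightarrow>
     (\<exists>a\<in>{1, 4}. \<exists>b\<in>{3, 6}. Q1 = {a, b, 2, 5} \<or> Q6 - Q1 = {a, b, 2, 5})"
  unfolding balanced6_def party_cuts6_eq Q6_def by code_simp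

lemma stabilizer_state_balanced6:
  assumes "stabilizer_state Q \<psi>" "\<forall>X\<in>party_cuts6. maximally_mixed Q (X \<inter> Q) \<psi>"
  shows "balanced6 Q"
  unfolding balanced6_def
proof
  fix X assume "X \<in> party_cuts6"
  then have "card (X \<inter> Q) \<le> card (Q - X \<inter> Q)"
    using stabilizer_maximally_mixed_card_le assms by blast
  moreover have "Q - X \<inter> Q = Q - X" by blast
  ultimately show "card (X \<inter> Q) \<le> card (Q - X)" by simp
qed

theorem mainTheorem14:
  fixes G :: state
  assumes "vec_on Q6 G" and "vnorm Q6 G = 1"
    and "\<forall>u\<in>Q6. apply_op Q6 (pauli Q6 {u} (nbrs6 u)) G = G"
  shows "\<not> (\<exists>Q1 Q2 (\<psi>1::state) (\<psi>2::state) (U :: nat \<Rightarrow> op) (c::complex).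
            Q1 \<inter> Q2 = {} \<and> Q1 \<union> Q2 = Q6 \<and> Q1 \<noteq> {} \<and> Q2 \<noteq> {} \<and>
            stabilizer_state Q1 \<psi>1 \<and> stabilizer_state Q2 \<psi>2 \<and>
            (\<forall>i<length parties6. clifford (parties6 ! i) (U i)) \<and>
            cmod c = 1 \<and>
            apply_op Q6 (local_op Q6 parties6 U) G = (\<lambda>S. c * tensor_state Q1 Q2 \<psi>1 \<psi>2 S))"
proof (intro notI, elim exE conjE)
  fix Q1 Q2 \<psi>1 \<psi>2 U c
  assume Q: "Q1 \<inter> Q2 = {}" "Q1 \<union> Q2 = Q6" "Q1 \<noteq> {}" "Q2 \<noteq> {}"
    and \<psi>: "stabilizer_state Q1 \<psi>1" "stabilizer_state Q2 \<psi>2"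
    and U: "\<forall>i<length parties6. clifford (parties6 ! i) (U i)" and "cmod c = 1"
    and eq: "apply_op Q6 (local_op Q6 parties6 U) G = (\<lambda>S. c * tensor_state Q1 Q2 \<psi>1 \<psi>2 S)"
  have "\<forall>i<length parties6. unitary_on (parties6 ! i) (U i)"
    using U by (simp add: clifford_def)
  moreover have "finite Q1" "finite Q2" using \<psi> by (simp_all add: stabilizer_state_def)
  ultimately have mixed: "\<forall>X\<in>party_cuts6. maximally_mixed Q1 (X \<inter> Q1) \<psi>1 \<and> maximally_mixed Q2 (X \<inter> Q2) \<psi>2"
    using LCU_tensor_maximally_mixed[OF assms(2,3) _ Q(1,2) _ _ eq] by blast
  then have "balanced6 Q1" "balanced6 Q2"
    using stabilizer_state_balanced6 \<psi> by blast+
  moreover have "Q1 \<in> Pow Q6" "Q1 \<noteq> Q6" "Q2 = Q6 - Q1" using Q by auto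
  ultimately obtain a b where "a \<in> {1, 4}" "b \<in> {3, 6}" "Q1 = {a, b, 2, 5} \<or> Q2 = {a, b, 2, 5}"
    using balanced6_bipartitions Q(3) by metis
  then show False
    using party_side_not_AME \<psi> mixed by blast
qed

end
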